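(* Let $G=G(m,p,n)$ where $m$ is odd or twice an odd integer, and let $P=P_{(0,\lambda)}$ be the standard parabolic subgroup for a partition $\lambda$ of $n$. Then there is a set $J$ of vectors, each a root of a reflection in $P$, such that $N_G(P)=P\rtimes G_J$, where $G_J$ is the setwise stabiliser of $J$ in $G$.
   Context: Let $m,p,n$ be positive integers with $p\mid m$, let $V=\mathbb{C}^n$ with the standard positive definite Hermitian form and orthonormal basis $e_1,\dots,e_n$, and let $\boldsymbol\mu_m$ be the group of complex $m$th roots of unity. $G(m,p,n)$ is the group of linear maps of $V$ of the form $e_i\mapsto\theta_ie_{\sigma(i)}$ with $\sigma\in\mathrm{Sym}(n)$, $\theta_i\in\boldsymbol\mu_m$ and $(\theta_1\cdots\theta_n)^{m/p}=1$. For a partition $\lambda=(n_1\ge\dots\ge n_d)$ of $n$ put $k_0=0$, $k_i=n_1+\cdots+n_i$ and $\Lambda_i=\{e_j:k_{i-1}<j\le k_i\}$; the standard parabolic subgroup $P_{(0,\lambda)}=\prod_{i=1}^d\mathrm{Sym}(n_i)$, where $\mathrm{Sym}(n_i)$ permutes the vectors of $\Lambda_i$ and fixes the other basis vectors. A root of a reflection $r$ is a non-zero vector orthogonal to the fixed hyperplane of $r$. *)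

theory Defs
  imports "Jordan_Normal_Form.Matrix" "HOL-Combinatorics.Permutations"
begin

(* Linear maps of V = C^n are n x n complex matrices (w.r.t. e_1..e_n, here indexed 0..n-1);
   column j of a matrix is the image of e_j. Vectors of V are elements of carrier_vec n. *)

definition mu :: "nat \<Rightarrow> complex set" where
  "mu m = {z. z ^ m = 1}"

(* the monomial matrix e_j \<mapsto> \<theta> j e_(\<sigma> j) *)
definition monomial_mat :: "nat \<Rightarrow> (nat \<Rightarrow> nat) \<Rightarrow> (nat \<Rightarrow> complex) \<Rightarrow> complex mat" where
  "monomial_mat n \<sigma> \<theta> = mat n n (\<lambda>(i, j). if i = \<sigma> j then \<theta> j else 0)"

definition Gmpn :: "nat \<Rightarrow> nat \<Rightarrow> nat \<Rightarrow> complex mat set" where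
  "Gmpn m p n = {monomial_mat n \<sigma> \<theta> | \<sigma> \<theta>.
      \<sigma> permutes {0..<n} \<and> (\<forall>i<n. \<theta> i \<in> mu m) \<and> (\<Prod>i<n. \<theta> i) ^ (m div p) = 1}"

definition is_partition :: "nat list \<Rightarrow> nat \<Rightarrow> bool" where
  "is_partition lam n \<longleftrightarrow> sorted_wrt (\<ge>) lam \<and> (\<forall>x\<in>set lam. 0 < x) \<and> sum_list lam = n"

definition kk :: "nat list \<Rightarrow> nat \<Rightarrow> nat" where
  "kk lam i = sum_list (take i lam)"

(* Lambda_i (as 0-based index set), for i = 1..d *)
definition block :: "nat list \<Rightarrow> nat \<Rightarrow> nat set" where
  "block lam i = {kk lam (i - 1) ..< kk lam i}"

definition std_parabolic :: "nat \<Rightarrow> nat list \<Rightarrow> complex mat set" where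
  "std_parabolic n lam = {monomial_mat n \<sigma> (\<lambda>_. 1) | \<sigma>.
      \<sigma> permutes {0..<n} \<and> (\<forall>i\<in>{1..length lam}. \<sigma> ` block lam i = block lam i)}"

definition fix_space :: "nat \<Rightarrow> complex mat \<Rightarrow> complex vec set" where
  "fix_space n r = {v \<in> carrier_vec n. r *\<^sub>v v = v}"

definition is_hyperplane :: "nat \<Rightarrow> complex vec set \<Rightarrow> bool" where
  "is_hyperplane n H \<longleftrightarrow> (\<exists>a\<in>carrier_vec n. a \<noteq> 0\<^sub>v n \<and> H = {v \<in> carrier_vec n. v \<bullet>c a = 0})"

definition is_reflection :: "nat \<Rightarrow> complex mat \<Rightarrow> bool" where
  "is_reflection n r \<longleftrightarrow> r \<in> carrier_mat n n \<and> r \<noteq> 1\<^sub>m n \<and>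
     (\<exists>k>0. r ^\<^sub>m k = 1\<^sub>m n) \<and> is_hyperplane n (fix_space n r)"

definition is_root :: "nat \<Rightarrow> complex mat \<Rightarrow> complex vec \<Rightarrow> bool" where
  "is_root n r u \<longleftrightarrow> u \<in> carrier_vec n \<and> u \<noteq> 0\<^sub>v n \<and> (\<forall>v\<in>fix_space n r. v \<bullet>c u = 0)"

(* normaliser N_G(P) = {g in G. g P g^-1 = P}, written as gP = Pg (g invertible) *)
definition normaliser :: "complex mat set \<Rightarrow> complex mat set \<Rightarrow> complex mat set" where
  "normaliser G P = {g \<in> G. {g * h | h. h \<in> P} = {h * g | h. h \<in> P}}"

definition set_stabiliser :: "complex mat set \<Rightarrow> complex vec set \<Rightarrow> complex mat set" where
  "set_stabiliser G J = {g \<in> G. (\<lambda>v. g *\<^sub>v v) ` J = J}"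

definition is_semidirect :: "nat \<Rightarrow> complex mat set \<Rightarrow> complex mat set \<Rightarrow> complex mat set \<Rightarrow> bool" where
  "is_semidirect n N P H \<longleftrightarrow> N = {a * b | a b. a \<in> P \<and> b \<in> H} \<and> P \<inter> H = {1\<^sub>m n}
     \<and> (\<forall>g\<in>N. {g * h | h. h \<in> P} = {h * g | h. h \<in> P})"

end

theory Submission
  imports Defs
begin

text \<open>An element of \<open>G(m,p,n)\<close> acting by \<open>e\<^sub>j \<mapsto> \<theta> j \<cdot> e\<^bsub>\<pi> j\<^esub>\<close> normalises
  \<open>P = \<Prod> Sym(n\<^sub>i)\<close> iff \<open>\<pi>\<close> permutes the blocks \<open>\<Lambda>\<^sub>i\<close> among themselves and \<open>\<theta>\<close> is constant
  on each block. Let \<open>k\<close> be the odd part of \<open>m\<close> and let \<open>J\<close> consist of the vectors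
  \<open>\<zeta> (e\<^sub>a - e\<^sub>b)\<close> with \<open>\<zeta>\<^sup>k = 1\<close> and \<open>a < b\<close> in a common block; these are roots of
  transpositions in \<open>P\<close>. Since \<open>m\<close> is odd or twice odd, every \<open>m\<close>-th root of unity is \<open>\<zeta>\<close>
  or \<open>-\<zeta>\<close> with \<open>\<zeta>\<^sup>k = 1\<close>. Hence for a normalising element one can map every block onto its
  image block increasingly or decreasingly, according to this sign of \<open>\<theta>\<close> on the block, by a
  permutation \<open>q\<close> such that \<open>e\<^sub>j \<mapsto> \<theta> j \<cdot> e\<^bsub>q j\<^esub>\<close> stabilises \<open>J\<close>; the element is then
  the product of \<open>\<pi> \<circ> q\<^sup>-\<^sup>1 \<in> P\<close> and this stabiliser. Conversely, every stabiliser of \<open>J\<close>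
  normalises \<open>P\<close>, and since \<open>(-1)\<^sup>k \<noteq> 1\<close>, an element of \<open>P\<close> stabilising \<open>J\<close> is increasing on
  every block, hence trivial.\<close>

section \<open>Monomial matrices\<close>

lemma monomial_mat_carrier [simp]:
  "monomial_mat n \<sigma> \<theta> \<in> carrier_mat n n"
  "dim_row (monomial_mat n \<sigma> \<theta>) = n" "dim_col (monomial_mat n \<sigma> \<theta>) = n"
  by (auto simp: monomial_mat_def)

lemma monomial_mat_index:
  "i < n \<Longrightarrow> j < n \<Longrightarrow> monomial_mat n \<sigma> \<theta> $$ (i, j) = (if i = \<sigma> j then \<theta> j else 0)"
  by (simp add: monomial_mat_def)

lemma permutes_less: "\<sigma> permutes {0..<n} \<Longrightarrow> j < n \<Longrightarrow> \<sigma> j < (n::nat)"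
  using permutes_in_image[of \<sigma> "{0..<n}" j] by auto

lemma sum_permutes_delta:
  fixes n :: nat
  assumes "\<sigma> permutes {0..<n}" "i < n"
  shows "(\<Sum>j\<in>{0..<n}. if i = \<sigma> j then f j else 0) = (f (Hilbert_Choice.inv \<sigma> i) :: 'a::comm_monoid_add)"
proof -
  have "(\<Sum>j\<in>{0..<n}. if i = \<sigma> j then f j else 0) = (\<Sum>j\<in>{0..<n}. if j = Hilbert_Choice.inv \<sigma> i then f j else 0)"
    by (rule sum.cong) (use permutes_inv_eq[OF assms(1)] in metis)+
  also have "\<dots> = f (Hilbert_Choice.inv \<sigma> i)"
    using permutes_less[OF permutes_inv[OF assms(1)] assms(2)] by (subst sum.delta) auto
  finally show ?thesis .
qed

lemma monomial_mat_mult_vec: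
  assumes "\<sigma> permutes {0..<n}" "v \<in> carrier_vec n"
  shows "monomial_mat n \<sigma> \<theta> *\<^sub>v v = vec n (\<lambda>i. \<theta> (Hilbert_Choice.inv \<sigma> i) * v $ Hilbert_Choice.inv \<sigma> i)"
proof (rule eq_vecI)
  fix i assume "i < dim_vec (vec n (\<lambda>i. \<theta> (Hilbert_Choice.inv \<sigma> i) * v $ Hilbert_Choice.inv \<sigma> i))"
  hence i: "i < n" by simp
  have "(monomial_mat n \<sigma> \<theta> *\<^sub>v v) $ i = (\<Sum>j\<in>{0..<n}. if i = \<sigma> j then \<theta> j * v $ j else 0)"
    using i assms(2) by (auto simp: scalar_prod_def monomial_mat_index intro: sum.cong)
  also have "\<dots> = \<theta> (Hilbert_Choice.inv \<sigma> i) * v $ Hilbert_Choice.inv \<sigma> i"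
    by (rule sum_permutes_delta[OF assms(1) i])
  finally show "(monomial_mat n \<sigma> \<theta> *\<^sub>v v) $ i = vec n (\<lambda>i. \<theta> (Hilbert_Choice.inv \<sigma> i) * v $ Hilbert_Choice.inv \<sigma> i) $ i"
    using i by simp
qed simp

lemma monomial_mat_mult:
  assumes "\<sigma> permutes {0..<n}"
  shows "monomial_mat n \<pi> \<theta> * monomial_mat n \<sigma> \<phi> = monomial_mat n (\<pi> \<circ> \<sigma>) (\<lambda>j. \<theta> (\<sigma> j) * \<phi> j)"
proof (rule eq_matI)
  fix i j assume "i < dim_row (monomial_mat n (\<pi> \<circ> \<sigma>) (\<lambda>j. \<theta> (\<sigma> j) * \<phi> j))"
    "j < dim_col (monomial_mat n (\<pi> \<circ> \<sigma>) (\<lambda>j. \<theta> (\<sigma> j) * \<phi> j))"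
  hence ij: "i < n" "j < n" by auto
  have "(monomial_mat n \<pi> \<theta> * monomial_mat n \<sigma> \<phi>) $$ (i, j)
      = (\<Sum>l\<in>{0..<n}. (if i = \<pi> l then \<theta> l else 0) * (if l = \<sigma> j then \<phi> j else 0))"
    using ij by (simp add: scalar_prod_def monomial_mat_index)
  also have "\<dots> = (\<Sum>l\<in>{0..<n}. if l = \<sigma> j then (if i = \<pi> l then \<theta> l else 0) * \<phi> j else 0)"
    by (rule sum.cong) auto
  also have "\<dots> = (if i = \<pi> (\<sigma> j) then \<theta> (\<sigma> j) else 0) * \<phi> j"
    using permutes_less[OF assms ij(2)] by simp
  finally show "(monomial_mat n \<pi> \<theta> * monomial_mat n \<sigma> \<phi>) $$ (i, j)
      = monomial_mat n (\<pi> \<circ> \<sigma>) (\<lambda>j. \<theta> (\<sigma> j) * \<phi> j) $$ (i, j)"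
    using ij by (simp add: monomial_mat_index)
qed auto

lemma monomial_mat_eqD:
  assumes "\<pi> permutes {0..<n}" "\<forall>j<n. \<theta> j \<noteq> 0"
    and "monomial_mat n \<pi> \<theta> = monomial_mat n \<pi>' \<theta>'" "j < n"
  shows "\<pi> j = \<pi>' j \<and> \<theta> j = \<theta>' j"
proof -
  have "monomial_mat n \<pi> \<theta> $$ (\<pi> j, j) = monomial_mat n \<pi>' \<theta>' $$ (\<pi> j, j)"
    using assms(3) by simp
  hence "\<theta> j = (if \<pi> j = \<pi>' j then \<theta>' j else 0)"
    using permutes_less[OF assms(1,4)] assms(4) by (simp add: monomial_mat_index)
  thus ?thesis using assms(2,4) by (auto split: if_splits)
qed

lemma monomial_mat_eq_one: "\<forall>j<n. \<sigma> j = j \<Longrightarrow> monomial_mat n \<sigma> (\<lambda>_. 1) = 1\<^sub>m n"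
  by (rule eq_matI) (auto simp: monomial_mat_index)

lemma monomial_mat_mult_vec_cancel:
  assumes "\<pi> permutes {0..<n}" "\<forall>j<n. \<theta> j \<noteq> 0" "v \<in> carrier_vec n" "w \<in> carrier_vec n"
    and "monomial_mat n \<pi> \<theta> *\<^sub>v v = monomial_mat n \<pi> \<theta> *\<^sub>v w"
  shows "v = w"
proof (rule eq_vecI)
  fix j assume "j < dim_vec w"
  hence j: "j < n" using assms(4) by simp
  have "vec n (\<lambda>i. \<theta> (Hilbert_Choice.inv \<pi> i) * v $ Hilbert_Choice.inv \<pi> i) $ \<pi> j = vec n (\<lambda>i. \<theta> (Hilbert_Choice.inv \<pi> i) * w $ Hilbert_Choice.inv \<pi> i) $ \<pi> j"
    using assms(5) unfolding monomial_mat_mult_vec[OF assms(1,3)] monomial_mat_mult_vec[OF assms(1,4)]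
    by simp
  hence "\<theta> j * v $ j = \<theta> j * w $ j"
    using permutes_less[OF assms(1) j] permutes_inverses(2)[OF assms(1)] by simp
  thus "v $ j = w $ j" using assms(2) j by simp
qed (use assms in simp)

lemma monomial_mat_conj:
  assumes "\<pi> permutes {0..<n}" "\<sigma> permutes {0..<n}" "\<forall>j. \<theta> (\<sigma> j) = \<theta> j"
  shows "monomial_mat n \<pi> \<theta> * monomial_mat n \<sigma> (\<lambda>_. 1)
       = monomial_mat n (\<pi> \<circ> \<sigma> \<circ> Hilbert_Choice.inv \<pi>) (\<lambda>_. 1) * monomial_mat n \<pi> \<theta>"
proof -
  have "\<pi> \<circ> \<sigma> \<circ> Hilbert_Choice.inv \<pi> \<circ> \<pi> = \<pi> \<circ> \<sigma>"
    using permutes_inv_o(2)[OF assms(1)] by (simp add: comp_assoc)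
  thus ?thesis using assms(3) unfolding monomial_mat_mult[OF assms(1)] monomial_mat_mult[OF assms(2)]
    by simp
qed

definition vec2 :: "nat \<Rightarrow> nat \<Rightarrow> nat \<Rightarrow> complex \<Rightarrow> complex \<Rightarrow> complex vec" where
  "vec2 n a b u w = vec n (\<lambda>i. if i = a then u else if i = b then w else 0)"

lemma vec2_carrier [simp]: "vec2 n a b u w \<in> carrier_vec n"
  by (simp add: vec2_def)

lemma vec2_index: "i < n \<Longrightarrow> vec2 n a b u w $ i = (if i = a then u else if i = b then w else 0)"
  by (simp add: vec2_def)

lemma vec2_swap: "a \<noteq> b \<Longrightarrow> vec2 n a b u w = vec2 n b a w u"
  unfolding vec2_def by (intro eq_vecI) auto

lemma vec2_nonzero: "a < n \<Longrightarrow> u \<noteq> 0 \<Longrightarrow> vec2 n a b u w \<noteq> 0\<^sub>v n"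
  by (metis index_zero_vec(1) vec2_index)

lemma vec2_eqD:
  assumes eq: "vec2 n a b u w = vec2 n a' b' u' w'"
    and "a \<noteq> b" "a < n" "b < n" "u \<noteq> 0" "w \<noteq> 0"
  shows "(a = a' \<and> b = b' \<and> u = u' \<and> w = w') \<or> (a = b' \<and> b = a' \<and> u = w' \<and> w = u')"
proof -
  have "vec2 n a b u w $ a = vec2 n a' b' u' w' $ a" "vec2 n a b u w $ b = vec2 n a' b' u' w' $ b"
    using eq by simp_all
  hence "u = (if a = a' then u' else if a = b' then w' else 0)"
    and "w = (if b = a' then u' else if b = b' then w' else 0)"
    using assms(2-4) by (simp_all add: vec2_index)
  thus ?thesis using assms(2,5,6) by (auto split: if_splits)
qed

lemma monomial_mat_mult_vec2:
  assumes "\<pi> permutes {0..<n}" "a < n" "b < n" "a \<noteq> b"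
  shows "monomial_mat n \<pi> \<theta> *\<^sub>v vec2 n a b u w = vec2 n (\<pi> a) (\<pi> b) (\<theta> a * u) (\<theta> b * w)"
  unfolding monomial_mat_mult_vec[OF assms(1) vec2_carrier]
proof (rule eq_vecI)
  fix i assume "i < dim_vec (vec2 n (\<pi> a) (\<pi> b) (\<theta> a * u) (\<theta> b * w))"
  hence i: "i < n" by (simp add: vec2_def)
  have "(Hilbert_Choice.inv \<pi> i = a) = (i = \<pi> a)" "(Hilbert_Choice.inv \<pi> i = b) = (i = \<pi> b)"
    using permutes_inv_eq[OF assms(1)] by auto
  moreover have "\<pi> a \<noteq> \<pi> b"
    using assms permutes_inj unfolding inj_def by metis
  ultimately show "vec n (\<lambda>i. \<theta> (Hilbert_Choice.inv \<pi> i) * vec2 n a b u w $ Hilbert_Choice.inv \<pi> i) $ i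
      = vec2 n (\<pi> a) (\<pi> b) (\<theta> a * u) (\<theta> b * w) $ i"
    using i permutes_less[OF permutes_inv[OF assms(1)] i] by (auto simp: vec2_index)
qed (simp add: vec2_def)

lemma scalar_prod_vec2:
  assumes "a \<noteq> b" "a < n" "b < n" "v \<in> carrier_vec n"
  shows "v \<bullet> vec2 n a b u w = v $ a * u + v $ b * w"
proof -
  have "v \<bullet> vec2 n a b u w
      = (\<Sum>i\<in>{0..<n}. (if i = a then v $ i * u else 0) + (if i = b then v $ i * w else 0))"
    using assms(1,4) by (auto simp: scalar_prod_def vec2_def intro: sum.cong)
  thus ?thesis using assms(2,3) by (simp add: sum.distrib)
qed

lemma conjugate_vec2: "conjugate (vec2 n a b u w) = vec2 n a b (cnj u) (cnj w)"
  unfolding vec2_def conjugate_vec_def by (intro eq_vecI) auto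

lemma transposition_reflection:
  assumes "a < n" "b < n" "a \<noteq> b" "\<zeta> \<noteq> 0"
  defines "r \<equiv> monomial_mat n (Transposition.transpose a b) (\<lambda>_. 1)"
  shows "is_reflection n r \<and> is_root n r (vec2 n a b \<zeta> (-\<zeta>))"
proof -
  let ?t = "Transposition.transpose a b"
  have t: "?t permutes {0..<n}" using assms by (intro permutes_swap_id) auto
  have "r $$ (a, a) \<noteq> 1\<^sub>m n $$ (a, a)"
    using assms by (simp add: r_def monomial_mat_index)
  hence nontrivial: "r \<noteq> 1\<^sub>m n" by auto
  have "r ^\<^sub>m 2 = r * r" by (simp add: numeral_2_eq_2 r_def)
  also have "\<dots> = 1\<^sub>m n" unfolding r_def monomial_mat_mult[OF t] by (simp add: monomial_mat_eq_one)
  finally have involution: "r ^\<^sub>m 2 = 1\<^sub>m n" .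
  have fixed: "fix_space n r = {v \<in> carrier_vec n. v $ a = v $ b}"
  proof (intro equalityI subsetI)
    fix v :: "complex vec" assume "v \<in> fix_space n r"
    hence v: "v \<in> carrier_vec n" "r *\<^sub>v v = v" by (auto simp: fix_space_def)
    hence "(r *\<^sub>v v) $ a = v $ a" by simp
    thus "v \<in> {v \<in> carrier_vec n. v $ a = v $ b}"
      using v assms unfolding r_def monomial_mat_mult_vec[OF t v(1)] by simp
  next
    fix v :: "complex vec" assume "v \<in> {v \<in> carrier_vec n. v $ a = v $ b}"
    hence v: "v \<in> carrier_vec n" "v $ a = v $ b" by auto
    have "r *\<^sub>v v = v"
      unfolding r_def monomial_mat_mult_vec[OF t v(1)]
      by (rule eq_vecI) (use v in \<open>auto simp: transpose_def\<close>)
    thus "v \<in> fix_space n r" using v by (simp add: fix_space_def)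
  qed
  have orth: "v \<bullet>c vec2 n a b c (-c) = (v $ a - v $ b) * cnj c" if "v \<in> carrier_vec n" for v c
    unfolding conjugate_vec2 using scalar_prod_vec2[OF assms(3,1,2) that] by (simp add: algebra_simps)
  have "is_hyperplane n (fix_space n r)"
    unfolding is_hyperplane_def fixed
    using orth[of _ 1] vec2_nonzero[OF assms(1), of 1] by (intro bexI[of _ "vec2 n a b 1 (-1)"]) auto
  hence "is_reflection n r"
    unfolding is_reflection_def using nontrivial involution by (auto simp: r_def intro!: exI[of _ 2])
  moreover have "is_root n r (vec2 n a b \<zeta> (-\<zeta>))"
    unfolding is_root_def using vec2_nonzero[OF assms(1,4)] orth fixed by auto
  ultimately show ?thesis ..
qed

lemma strict_mono_on_interval_fixed:
  fixes f :: "nat \<Rightarrow> nat"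
  assumes mono: "strict_mono_on {lo..<hi} f" and onto: "f ` {lo..<hi} = {lo..<hi}"
    and x: "x \<in> {lo..<hi}"
  shows "f x = x"
proof -
  have "f ` {lo..<x} = {lo..<f x}"
  proof (intro equalityI subsetI)
    fix z assume "z \<in> f ` {lo..<x}"
    then obtain y where "y \<in> {lo..<x}" "z = f y" by blast
    thus "z \<in> {lo..<f x}" using onto x strict_mono_onD[OF mono] by fastforce
  next
    fix z assume z: "z \<in> {lo..<f x}"
    moreover have "f x \<in> {lo..<hi}" using onto x by blast
    ultimately have "z \<in> f ` {lo..<hi}" unfolding onto by auto
    then obtain y where "y \<in> {lo..<hi}" "z = f y" by blast
    thus "z \<in> f ` {lo..<x}" using z x strict_mono_on_less[OF mono] by auto
  qed
  moreover have "inj_on f {lo..<x}"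
    using strict_mono_on_imp_inj_on[OF mono] x by (auto intro: inj_on_subset)
  ultimately have "x - lo = f x - lo" by (metis card_atLeastLessThan card_image)
  moreover have "lo \<le> f x" using onto x by fastforce
  ultimately show ?thesis using x by (simp add: atLeastLessThan_iff, linarith)
qed

lemma shift_reflect_in_interval:
  fixes a lo hi lo' hi' :: nat
  assumes "hi' - lo' = hi - lo" "a \<in> {lo..<hi}"
  shows "lo' + (a - lo) \<in> {lo'..<hi'}" "hi' - 1 - (a - lo) \<in> {lo'..<hi'}"
  using assms by auto

lemma shift_reflect_less_iff:
  fixes a b lo hi lo' hi' :: nat
  assumes "hi' - lo' = hi - lo" "a \<in> {lo..<hi}" "b \<in> {lo..<hi}"
  shows "lo' + (a - lo) < lo' + (b - lo) \<longleftrightarrow> a < b"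
    "hi' - 1 - (a - lo) < hi' - 1 - (b - lo) \<longleftrightarrow> b < a"
  using assms by auto

lemma mu_one: "1 \<in> mu k"
  by (simp add: mu_def)

lemma mu_mult: "a \<in> mu k \<Longrightarrow> b \<in> mu k \<Longrightarrow> a * b \<in> mu k"
  by (simp add: mu_def power_mult_distrib)

lemma mu_nonzero: "0 < k \<Longrightarrow> z \<in> mu k \<Longrightarrow> z \<noteq> 0"
  by (auto simp: mu_def power_0_left)

lemma neg_one_notin_mu: "odd k \<Longrightarrow> - 1 \<notin> mu k"
  by (simp add: mu_def)

lemma mu_double_odd:
  assumes "odd k" "z \<in> mu (2 * k)"
  shows "z \<in> mu k \<or> - z \<in> mu k"
proof -
  have "(z ^ k) ^ 2 = 1" using assms(2) by (simp add: mu_def power_mult[symmetric] mult.commute)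
  hence "z ^ k = 1 \<or> z ^ k = - 1" by (simp add: power2_eq_1_iff)
  thus ?thesis using assms(1) by (auto simp: mu_def power_minus_odd)
qed

section \<open>Blocks of a partition and the normaliser of \<open>P\<close>\<close>

lemma kk_Suc: "kk lam (Suc i) = kk lam i + (if i < length lam then lam ! i else 0)"
  unfolding kk_def by (cases "i < length lam") (auto simp: take_Suc_conv_app_nth)

lemma kk_mono: "i \<le> j \<Longrightarrow> kk lam i \<le> kk lam j"
  by (induction rule: dec_induct) (auto simp: kk_Suc)

lemma block_unique: "a \<in> block lam i \<Longrightarrow> a \<in> block lam j \<Longrightarrow> i = j"
proof (induction i j rule: linorder_wlog)
  case (le i j)
  show ?case
  proof (rule ccontr)
    assume "i \<noteq> j"
    hence "kk lam i \<le> kk lam (j - 1)" using le.hyps by (intro kk_mono) simp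
    thus False using le.prems by (auto simp: block_def)
  qed
qed (simp add: eq_commute)

lemma block_index: "a \<in> block lam i \<Longrightarrow> i \<in> {1..length lam}"
proof (rule ccontr)
  assume a: "a \<in> block lam i" and "i \<notin> {1..length lam}"
  then consider "i = 0" | "length lam \<le> i - 1" by fastforce
  hence "kk lam i = kk lam (i - 1)" by cases (auto simp: kk_def)
  thus False using a by (simp add: block_def)
qed

locale partitioned =
  fixes n :: nat and lam :: "nat list"
  assumes partition: "is_partition lam n"
begin

abbreviation P :: "complex mat set" where "P \<equiv> std_parabolic n lam"

lemma block_exists: "a < n \<Longrightarrow> \<exists>i. a \<in> block lam i"
proof -
  assume "a < n"
  hence ad: "a < kk lam (length lam)" using partition by (simp add: kk_def is_partition_def)
  define i where "i = (LEAST i. a < kk lam i)"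
  have "a < kk lam i" unfolding i_def by (rule LeastI[of _ "length lam"]) (rule ad)
  moreover have "\<not> a < kk lam (i - 1)" if "i \<noteq> 0"
    unfolding i_def by (rule not_less_Least) (use that i_def in auto)
  ultimately have "a \<in> block lam i" by (cases "i = 0") (auto simp: block_def kk_def)
  thus ?thesis ..
qed

lemma block_less: "a \<in> block lam i \<Longrightarrow> a < n"
proof -
  assume a: "a \<in> block lam i"
  have "kk lam i \<le> kk lam (length lam)" using block_index[OF a] by (intro kk_mono) auto
  thus ?thesis using a partition by (auto simp: block_def kk_def is_partition_def)
qed

lemma block_first: "i \<in> {1..length lam} \<Longrightarrow> kk lam (i - 1) \<in> block lam i"
  using partition kk_Suc[of lam "i - 1"] by (auto simp: block_def is_partition_def)

definition block_of :: "nat \<Rightarrow> nat" where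
  "block_of a = (THE i. a \<in> block lam i)"

lemma block_of_eq: "a \<in> block lam i \<Longrightarrow> block_of a = i"
  unfolding block_of_def using block_unique by blast

lemma in_block_of: "a < n \<Longrightarrow> a \<in> block lam (block_of a)"
  using block_exists block_of_eq by blast

definition same_block :: "nat \<Rightarrow> nat \<Rightarrow> bool" where
  "same_block a b \<longleftrightarrow> (\<exists>i. a \<in> block lam i \<and> b \<in> block lam i)"

lemma same_blockI: "a \<in> block lam i \<Longrightarrow> b \<in> block lam i \<Longrightarrow> same_block a b"
  unfolding same_block_def by blast

lemma same_blockD: "same_block a b \<Longrightarrow> a \<in> block lam i \<Longrightarrow> b \<in> block lam i"
  unfolding same_block_def using block_unique by blast

lemma same_block_refl: "a < n \<Longrightarrow> same_block a a"
  using block_exists unfolding same_block_def by blast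

lemma same_block_sym: "same_block a b \<Longrightarrow> same_block b a"
  unfolding same_block_def by blast

lemma same_block_trans: "same_block a b \<Longrightarrow> same_block b c \<Longrightarrow> same_block a c"
  unfolding same_block_def using block_unique by blast

lemma same_block_less: "same_block a b \<Longrightarrow> a < n \<and> b < n"
  unfolding same_block_def using block_less by blast

definition parabolic :: "(nat \<Rightarrow> nat) \<Rightarrow> bool" where
  "parabolic \<sigma> \<longleftrightarrow> \<sigma> permutes {0..<n} \<and> (\<forall>a<n. same_block a (\<sigma> a))"

lemma permutes_blocks_iff:
  assumes "\<sigma> permutes {0..<n}"
  shows "(\<forall>i\<in>{1..length lam}. \<sigma> ` block lam i = block lam i) \<longleftrightarrow> (\<forall>a<n. same_block a (\<sigma> a))"
proof
  assume blocks: "\<forall>i\<in>{1..length lam}. \<sigma> ` block lam i = block lam i"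
  show "\<forall>a<n. same_block a (\<sigma> a)"
  proof (intro allI impI)
    fix a assume "a < n"
    then obtain i where a: "a \<in> block lam i" using block_exists by blast
    hence "\<sigma> a \<in> block lam i" using blocks block_index[OF a] by blast
    with a show "same_block a (\<sigma> a)" by (rule same_blockI)
  qed
next
  assume same: "\<forall>a<n. same_block a (\<sigma> a)"
  show "\<forall>i\<in>{1..length lam}. \<sigma> ` block lam i = block lam i"
  proof (intro ballI equalityI subsetI)
    fix i x assume "x \<in> \<sigma> ` block lam i"
    then obtain a where a: "a \<in> block lam i" and x: "x = \<sigma> a" by blast
    have "same_block a (\<sigma> a)" using same block_less[OF a] by blast
    thus "x \<in> block lam i" using same_blockD a x by blast
  next
    fix i x assume x: "x \<in> block lam i"
    define y where "y = Hilbert_Choice.inv \<sigma> x"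
    have "y < n" unfolding y_def using permutes_less[OF permutes_inv[OF assms] block_less[OF x]] .
    moreover have xy: "\<sigma> y = x" unfolding y_def using permutes_inverses(1)[OF assms] by simp
    ultimately have "same_block x y" using same same_block_sym by metis
    hence "y \<in> block lam i" using same_blockD x by blast
    thus "x \<in> \<sigma> ` block lam i" using xy by blast
  qed
qed

lemma in_std_parabolic_iff:
  "h \<in> P \<longleftrightarrow> (\<exists>\<sigma>. h = monomial_mat n \<sigma> (\<lambda>_. 1) \<and> parabolic \<sigma>)"
  unfolding std_parabolic_def parabolic_def using permutes_blocks_iff by blast

lemma parabolic_transpose:
  assumes "same_block a b"
  shows "parabolic (Transposition.transpose a b)"
proof -
  have "a < n" "b < n" using same_block_less[OF assms] by auto
  moreover have "same_block x (Transposition.transpose a b x)" if "x < n" for x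
    using assms same_block_sym[OF assms] same_block_refl[OF that] by (simp add: transpose_def)
  ultimately show ?thesis unfolding parabolic_def by (auto intro: permutes_swap_id)
qed

lemma one_in_std_parabolic: "1\<^sub>m n \<in> P"
  unfolding in_std_parabolic_iff parabolic_def
  by (auto intro!: exI[of _ id] simp: monomial_mat_eq_one same_block_refl permutes_id)

definition block_preserving :: "(nat \<Rightarrow> nat) \<Rightarrow> bool" where
  "block_preserving \<pi> \<longleftrightarrow> (\<forall>a<n. \<forall>b<n. same_block a b \<longleftrightarrow> same_block (\<pi> a) (\<pi> b))"

definition block_constant :: "(nat \<Rightarrow> 'a) \<Rightarrow> bool" where
  "block_constant \<theta> \<longleftrightarrow> (\<forall>a b. same_block a b \<longrightarrow> \<theta> a = \<theta> b)"

lemma parabolic_block_preserving: "parabolic \<sigma> \<Longrightarrow> block_preserving \<sigma>"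
  unfolding parabolic_def block_preserving_def by (meson same_block_sym same_block_trans)

lemma block_preserving_comp:
  assumes "\<pi> permutes {0..<n}" "block_preserving \<pi>" "block_preserving \<sigma>"
  shows "block_preserving (\<sigma> \<circ> \<pi>)"
  unfolding block_preserving_def
proof (intro allI impI)
  fix a b assume ab: "a < n" "b < n"
  have "same_block a b \<longleftrightarrow> same_block (\<pi> a) (\<pi> b)" using assms(2) ab by (simp add: block_preserving_def)
  also have "\<dots> \<longleftrightarrow> same_block (\<sigma> (\<pi> a)) (\<sigma> (\<pi> b))"
    using assms(3) permutes_less[OF assms(1)] ab by (simp add: block_preserving_def)
  finally show "same_block a b \<longleftrightarrow> same_block ((\<sigma> \<circ> \<pi>) a) ((\<sigma> \<circ> \<pi>) b)" by simp
qed

lemma block_preserving_inv: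
  assumes "\<pi> permutes {0..<n}" "block_preserving \<pi>"
  shows "block_preserving (Hilbert_Choice.inv \<pi>)"
  unfolding block_preserving_def
proof (intro allI impI)
  fix a b assume "a < n" "b < n"
  hence "Hilbert_Choice.inv \<pi> a < n" "Hilbert_Choice.inv \<pi> b < n"
    using permutes_less[OF permutes_inv[OF assms(1)]] by auto
  thus "same_block a b \<longleftrightarrow> same_block (Hilbert_Choice.inv \<pi> a) (Hilbert_Choice.inv \<pi> b)"
    using assms(2) permutes_inverses(1)[OF assms(1)] unfolding block_preserving_def by metis
qed

lemma parabolic_conj:
  assumes "\<pi> permutes {0..<n}" "block_preserving \<pi>" "parabolic \<sigma>"
  shows "parabolic (\<pi> \<circ> \<sigma> \<circ> Hilbert_Choice.inv \<pi>)"
  unfolding parabolic_def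
proof (intro conjI allI impI)
  show "\<pi> \<circ> \<sigma> \<circ> Hilbert_Choice.inv \<pi> permutes {0..<n}"
    using assms(1,3) unfolding parabolic_def by (intro permutes_compose permutes_inv) auto
  fix a assume "a < n"
  define a' where "a' = Hilbert_Choice.inv \<pi> a"
  have a': "a' < n" "\<pi> a' = a"
    unfolding a'_def using permutes_less[OF permutes_inv[OF assms(1)] \<open>a < n\<close>]
      permutes_inverses(1)[OF assms(1)] by auto
  hence "same_block a' (\<sigma> a')" "\<sigma> a' < n" using assms(3) permutes_less unfolding parabolic_def by auto
  hence "same_block (\<pi> a') (\<pi> (\<sigma> a'))" using assms(2) a'(1) unfolding block_preserving_def by blast
  thus "same_block a ((\<pi> \<circ> \<sigma> \<circ> Hilbert_Choice.inv \<pi>) a)" using a' by (simp add: a'_def)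
qed

lemma normalises_std_parabolic:
  assumes pi: "\<pi> permutes {0..<n}" and pres: "block_preserving \<pi>" and const: "block_constant \<theta>"
  defines "g \<equiv> monomial_mat n \<pi> \<theta>"
  shows "{g * h | h. h \<in> P} = {h * g | h. h \<in> P}"
proof -
  let ?conj = "\<lambda>\<sigma>. \<pi> \<circ> \<sigma> \<circ> Hilbert_Choice.inv \<pi>"
  have conj: "g * monomial_mat n \<sigma> (\<lambda>_. 1) = monomial_mat n (?conj \<sigma>) (\<lambda>_. 1) * g"
    if "parabolic \<sigma>" for \<sigma>
  proof -
    have "\<theta> (\<sigma> j) = \<theta> j" for j
    proof (cases "j < n")
      case True
      thus ?thesis using that const unfolding parabolic_def block_constant_def by metis
    next
      case False
      thus ?thesis using that permutes_not_in unfolding parabolic_def by fastforce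
    qed
    thus ?thesis unfolding g_def using monomial_mat_conj pi that unfolding parabolic_def by blast
  qed
  have surj: "\<exists>\<sigma>. parabolic \<sigma> \<and> ?conj \<sigma> = \<sigma>'" if "parabolic \<sigma>'" for \<sigma>'
  proof (intro exI conjI)
    have "Hilbert_Choice.inv (Hilbert_Choice.inv \<pi>) = \<pi>"
      by (rule inv_inv_eq[OF permutes_bij[OF pi]])
    thus "parabolic (Hilbert_Choice.inv \<pi> \<circ> \<sigma>' \<circ> \<pi>)"
      using parabolic_conj[OF permutes_inv[OF pi] block_preserving_inv[OF pi pres] that] by simp
    show "?conj (Hilbert_Choice.inv \<pi> \<circ> \<sigma>' \<circ> \<pi>) = \<sigma>'"
      by (simp add: fun_eq_iff permutes_inverses[OF pi])
  qed
  show ?thesis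
  proof (intro equalityI subsetI)
    fix x assume "x \<in> {g * h | h. h \<in> P}"
    then obtain \<sigma> where x: "x = g * monomial_mat n \<sigma> (\<lambda>_. 1)" and \<sigma>: "parabolic \<sigma>"
      unfolding in_std_parabolic_iff by blast
    have "x = monomial_mat n (?conj \<sigma>) (\<lambda>_. 1) * g" using conj[OF \<sigma>] x by simp
    moreover have "parabolic (?conj \<sigma>)" by (rule parabolic_conj[OF pi pres \<sigma>])
    ultimately show "x \<in> {h * g | h. h \<in> P}" unfolding in_std_parabolic_iff by blast
  next
    fix x assume "x \<in> {h * g | h. h \<in> P}"
    then obtain \<sigma>' where x: "x = monomial_mat n \<sigma>' (\<lambda>_. 1) * g" and \<sigma>': "parabolic \<sigma>'"
      unfolding in_std_parabolic_iff by blast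
    then obtain \<sigma> where \<sigma>: "parabolic \<sigma>" and "?conj \<sigma> = \<sigma>'" using surj by blast
    hence "x = g * monomial_mat n \<sigma> (\<lambda>_. 1)" using conj[OF \<sigma>] x by simp
    thus "x \<in> {g * h | h. h \<in> P}" using \<sigma> unfolding in_std_parabolic_iff by blast
  qed
qed

lemma block_preserving_constantI:
  assumes pi: "\<pi> permutes {0..<n}"
    and fw: "\<And>a b. same_block a b \<Longrightarrow> a < b \<Longrightarrow> same_block (\<pi> a) (\<pi> b) \<and> \<theta> a = \<theta> b"
    and bw: "\<And>a b. a < n \<Longrightarrow> b < n \<Longrightarrow> same_block (\<pi> a) (\<pi> b) \<Longrightarrow> \<pi> a < \<pi> b \<Longrightarrow> same_block a b"
  shows "block_preserving \<pi> \<and> block_constant \<theta>"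
proof -
  have fw': "same_block (\<pi> a) (\<pi> b) \<and> \<theta> a = \<theta> b" if ab: "same_block a b" "a \<noteq> b" for a b
  proof (cases "a < b")
    case True
    thus ?thesis using ab fw by blast
  next
    case False
    hence "same_block (\<pi> b) (\<pi> a) \<and> \<theta> b = \<theta> a"
      using ab fw same_block_sym[OF ab(1)] by simp
    thus ?thesis using same_block_sym by auto
  qed
  have bw': "same_block a b" if ab: "a < n" "b < n" "same_block (\<pi> a) (\<pi> b)" "a \<noteq> b" for a b
  proof -
    have "\<pi> a \<noteq> \<pi> b" using ab(4) permutes_inj[OF pi] unfolding inj_def by blast
    hence "\<pi> a < \<pi> b \<or> \<pi> b < \<pi> a" by linarith
    thus ?thesis using ab bw[of a b] bw[of b a] same_block_sym by blast
  qed
  have "block_preserving \<pi>"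
    unfolding block_preserving_def
  proof (intro allI impI)
    fix a b assume ab: "a < n" "b < n"
    show "same_block a b \<longleftrightarrow> same_block (\<pi> a) (\<pi> b)"
    proof (cases "a = b")
      case True
      thus ?thesis using same_block_refl ab permutes_less[OF pi] by simp
    next
      case False
      thus ?thesis using fw' bw' ab by blast
    qed
  qed
  moreover have "block_constant \<theta>"
    unfolding block_constant_def
  proof (intro allI impI)
    fix a b assume "same_block a b"
    thus "\<theta> a = \<theta> b" using fw' by (cases "a = b") auto
  qed
  ultimately show ?thesis ..
qed

lemma normalises_std_parabolic_imp:
  assumes pi: "\<pi> permutes {0..<n}" and nonzero: "\<forall>j<n. \<theta> j \<noteq> 0"
  defines "g \<equiv> monomial_mat n \<pi> \<theta>"
  assumes normal: "{g * h | h. h \<in> P} = {h * g | h. h \<in> P}"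
  shows "block_preserving \<pi> \<and> block_constant \<theta>"
proof (rule block_preserving_constantI[OF pi])
  fix a b assume ab: "same_block a b" "a < b"
  let ?t = "Transposition.transpose a b"
  have t: "parabolic ?t" by (rule parabolic_transpose[OF ab(1)])
  hence t_perm: "?t permutes {0..<n}" unfolding parabolic_def by blast
  have "monomial_mat n ?t (\<lambda>_. 1) \<in> P" using t in_std_parabolic_iff by blast
  hence "g * monomial_mat n ?t (\<lambda>_. 1) \<in> {h * g | h. h \<in> P}" unfolding normal[symmetric] by blast
  then obtain h where e: "g * monomial_mat n ?t (\<lambda>_. 1) = h * g" and "h \<in> P" by blast
  then obtain \<sigma> where h: "h = monomial_mat n \<sigma> (\<lambda>_. 1)" and \<sigma>: "parabolic \<sigma>"
    unfolding in_std_parabolic_iff by blast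
  have eq: "monomial_mat n (\<pi> \<circ> ?t) (\<lambda>j. \<theta> (?t j) * 1) = monomial_mat n (\<sigma> \<circ> \<pi>) (\<lambda>j. 1 * \<theta> j)"
    using e unfolding h g_def monomial_mat_mult[OF pi] monomial_mat_mult[OF t_perm] .
  have nz: "\<forall>j<n. \<theta> (?t j) * 1 \<noteq> 0" using nonzero permutes_less[OF t_perm] by simp
  have a: "a < n" using same_block_less[OF ab(1)] by blast
  have "(\<pi> \<circ> ?t) a = (\<sigma> \<circ> \<pi>) a \<and> \<theta> (?t a) * 1 = 1 * \<theta> a"
    by (rule monomial_mat_eqD[OF permutes_compose[OF t_perm pi] nz eq a])
  hence "\<pi> b = \<sigma> (\<pi> a) \<and> \<theta> b = \<theta> a" by (simp add: transpose_apply_first)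
  moreover have "same_block (\<pi> a) (\<sigma> (\<pi> a))"
    using \<sigma> permutes_less[OF pi a] unfolding parabolic_def by blast
  ultimately show "same_block (\<pi> a) (\<pi> b) \<and> \<theta> a = \<theta> b" by simp
next
  fix a b assume ab: "a < n" "b < n" "same_block (\<pi> a) (\<pi> b)" "\<pi> a < \<pi> b"
  let ?t = "Transposition.transpose (\<pi> a) (\<pi> b)"
  have "parabolic ?t" by (rule parabolic_transpose[OF ab(3)])
  hence "monomial_mat n ?t (\<lambda>_. 1) \<in> P" using in_std_parabolic_iff by blast
  hence "monomial_mat n ?t (\<lambda>_. 1) * g \<in> {g * h | h. h \<in> P}" unfolding normal by blast
  then obtain h where e: "monomial_mat n ?t (\<lambda>_. 1) * g = g * h" and "h \<in> P" by blast
  then obtain \<sigma> where h: "h = monomial_mat n \<sigma> (\<lambda>_. 1)" and \<sigma>: "parabolic \<sigma>"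
    unfolding in_std_parabolic_iff by blast
  hence \<sigma>_perm: "\<sigma> permutes {0..<n}" unfolding parabolic_def by blast
  have eq: "monomial_mat n (?t \<circ> \<pi>) (\<lambda>j. 1 * \<theta> j) = monomial_mat n (\<pi> \<circ> \<sigma>) (\<lambda>j. \<theta> (\<sigma> j) * 1)"
    using e unfolding h g_def monomial_mat_mult[OF pi] monomial_mat_mult[OF \<sigma>_perm] .
  have nz: "\<forall>j<n. 1 * \<theta> j \<noteq> 0" using nonzero by simp
  have t_perm: "?t permutes {0..<n}" using \<open>parabolic ?t\<close> unfolding parabolic_def by blast
  have "(?t \<circ> \<pi>) a = (\<pi> \<circ> \<sigma>) a"
    using monomial_mat_eqD[OF permutes_compose[OF pi t_perm] nz eq ab(1)] by blast
  hence "\<pi> b = \<pi> (\<sigma> a)" by (simp add: transpose_apply_first)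
  hence "b = \<sigma> a" using permutes_inj[OF pi] unfolding inj_def by blast
  thus "same_block a b" using \<sigma> ab(1) unfolding parabolic_def by blast
qed

lemma normalises_std_parabolic_iff:
  assumes "\<pi> permutes {0..<n}" "\<forall>j<n. \<theta> j \<noteq> 0"
  shows "{monomial_mat n \<pi> \<theta> * h | h. h \<in> P} = {h * monomial_mat n \<pi> \<theta> | h. h \<in> P}
     \<longleftrightarrow> block_preserving \<pi> \<and> block_constant \<theta>"
proof
  assume "{monomial_mat n \<pi> \<theta> * h | h. h \<in> P} = {h * monomial_mat n \<pi> \<theta> | h. h \<in> P}"
  thus "block_preserving \<pi> \<and> block_constant \<theta>" by (rule normalises_std_parabolic_imp[OF assms])
next
  assume "block_preserving \<pi> \<and> block_constant \<theta>"
  thus "{monomial_mat n \<pi> \<theta> * h | h. h \<in> P} = {h * monomial_mat n \<pi> \<theta> | h. h \<in> P}"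
    using normalises_std_parabolic[OF assms(1)] by blast
qed

definition block_target :: "(nat \<Rightarrow> nat) \<Rightarrow> nat \<Rightarrow> nat" where
  "block_target \<pi> i = block_of (\<pi> (kk lam (i - 1)))"

lemma block_image:
  assumes pi: "\<pi> permutes {0..<n}" and pres: "block_preserving \<pi>" and i: "i \<in> {1..length lam}"
  shows "\<pi> ` block lam i = block lam (block_target \<pi> i)"
proof -
  let ?a = "kk lam (i - 1)" and ?j = "block_target \<pi> i"
  have a: "?a \<in> block lam i" "?a < n" using block_first[OF i] block_less by auto
  have pa: "\<pi> ?a \<in> block lam ?j"
    unfolding block_target_def using in_block_of permutes_less[OF pi a(2)] by blast
  have iff: "x \<in> block lam i \<longleftrightarrow> \<pi> x \<in> block lam ?j" if "x < n" for x
  proof -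
    have "x \<in> block lam i \<longleftrightarrow> same_block x ?a"
      using a(1) same_blockI same_blockD same_block_sym by metis
    also have "\<dots> \<longleftrightarrow> same_block (\<pi> x) (\<pi> ?a)"
      using pres that a(2) unfolding block_preserving_def by blast
    also have "\<dots> \<longleftrightarrow> \<pi> x \<in> block lam ?j"
      using pa same_blockI same_blockD same_block_sym by metis
    finally show ?thesis .
  qed
  show ?thesis
  proof (intro equalityI subsetI)
    fix y assume "y \<in> \<pi> ` block lam i"
    thus "y \<in> block lam ?j" using iff block_less by blast
  next
    fix y assume y: "y \<in> block lam ?j"
    define x where "x = Hilbert_Choice.inv \<pi> y"
    have "x < n" unfolding x_def using permutes_less[OF permutes_inv[OF pi] block_less[OF y]] .
    moreover have "\<pi> x = y" unfolding x_def using permutes_inverses(1)[OF pi] by simp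
    ultimately show "y \<in> \<pi> ` block lam i" using iff y by blast
  qed
qed

lemma block_target_size:
  assumes "\<pi> permutes {0..<n}" "block_preserving \<pi>" "i \<in> {1..length lam}"
  defines "j \<equiv> block_target \<pi> i"
  shows "kk lam j - kk lam (j - 1) = kk lam i - kk lam (i - 1)"
proof -
  have "card (\<pi> ` block lam i) = card (block lam i)"
    using permutes_inj[OF assms(1)] by (auto intro: card_image inj_on_subset)
  thus ?thesis using block_image[OF assms(1-3)] unfolding j_def block_def by simp
qed

lemma block_target_inj:
  assumes "\<pi> permutes {0..<n}" "block_preserving \<pi>" "i \<in> {1..length lam}" "i' \<in> {1..length lam}"
    and "block_target \<pi> i = block_target \<pi> i'"
  shows "i = i'"
proof -
  have "\<pi> ` block lam i = \<pi> ` block lam i'"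
    using block_image[OF assms(1,2)] assms(3-5) by metis
  hence "block lam i = block lam i'" using permutes_inj[OF assms(1)] by (simp add: inj_image_eq_iff)
  thus ?thesis using block_first[OF assms(3)] block_unique by metis
qed

text \<open>Maps each block \<open>\<Lambda>\<^sub>i\<close> onto its image block under \<open>\<pi>\<close> by the increasing bijection,
  or by the decreasing one if \<open>flip i\<close>.\<close>
definition align :: "(nat \<Rightarrow> nat) \<Rightarrow> (nat \<Rightarrow> bool) \<Rightarrow> nat \<Rightarrow> nat" where
  "align \<pi> flip a =
    (if a < n then
      let i = block_of a; j = block_target \<pi> i
      in if flip i then kk lam j - 1 - (a - kk lam (i - 1)) else kk lam (j - 1) + (a - kk lam (i - 1))
    else a)"

lemma align_eq:
  assumes "a \<in> block lam i"
  shows "align \<pi> flip a = (if flip i then kk lam (block_target \<pi> i) - 1 - (a - kk lam (i - 1))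
      else kk lam (block_target \<pi> i - 1) + (a - kk lam (i - 1)))"
  using assms block_less[OF assms] by (simp add: align_def Let_def block_of_eq)

lemma align_in_block:
  assumes pi: "\<pi> permutes {0..<n}" and pres: "block_preserving \<pi>" and a: "a \<in> block lam i"
  shows "align \<pi> flip a \<in> block lam (block_target \<pi> i)"
  using shift_reflect_in_interval[OF block_target_size[OF pi pres block_index[OF a]]] a
  unfolding align_eq[OF a] block_def by simp

lemma align_less_iff:
  assumes pi: "\<pi> permutes {0..<n}" and pres: "block_preserving \<pi>"
    and a: "a \<in> block lam i" and b: "b \<in> block lam i"
  shows "align \<pi> flip a < align \<pi> flip b \<longleftrightarrow> (if flip i then b < a else a < b)"
  using shift_reflect_less_iff[OF block_target_size[OF pi pres block_index[OF a]]] a b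
  unfolding align_eq[OF a] align_eq[OF b] block_def by simp

lemma align_permutes:
  assumes pi: "\<pi> permutes {0..<n}" and pres: "block_preserving \<pi>"
  shows "align \<pi> flip permutes {0..<n}"
proof -
  let ?q = "align \<pi> flip"
  have "inj_on ?q {0..<n}"
  proof (rule inj_onI)
    fix a b assume "a \<in> {0..<n}" "b \<in> {0..<n}" and eq: "?q a = ?q b"
    then obtain i i' where a: "a \<in> block lam i" and b: "b \<in> block lam i'"
      using block_exists by force
    have "?q a \<in> block lam (block_target \<pi> i)" "?q b \<in> block lam (block_target \<pi> i')"
      using align_in_block[OF pi pres] a b by auto
    hence "block_target \<pi> i = block_target \<pi> i'" using eq block_unique by metis
    hence "i = i'" using block_target_inj[OF pi pres block_index[OF a] block_index[OF b]] by blast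
    hence b: "b \<in> block lam i" using b by simp
    show "a = b"
    proof (rule ccontr)
      assume "a \<noteq> b"
      hence "?q a < ?q b \<or> ?q b < ?q a"
        using align_less_iff[OF pi pres a b] align_less_iff[OF pi pres b a] by (cases "flip i") auto
      thus False using eq by simp
    qed
  qed
  moreover have "?q ` {0..<n} \<subseteq> {0..<n}"
    using block_exists align_in_block[OF pi pres] block_less by fastforce
  ultimately have "bij_betw ?q {0..<n} {0..<n}"
    unfolding bij_betw_def using endo_inj_surj by blast
  moreover have "?q x = x" if "x \<notin> {0..<n}" for x
    using that by (simp add: align_def)
  ultimately show ?thesis by (rule bij_imp_permutes)
qed

lemma parabolic_comp_inv_align:
  assumes pi: "\<pi> permutes {0..<n}" and pres: "block_preserving \<pi>"
  shows "parabolic (\<pi> \<circ> Hilbert_Choice.inv (align \<pi> flip))"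
  unfolding parabolic_def
proof (intro conjI allI impI)
  let ?q = "align \<pi> flip"
  have q: "?q permutes {0..<n}" by (rule align_permutes[OF pi pres])
  show "\<pi> \<circ> Hilbert_Choice.inv ?q permutes {0..<n}"
    by (rule permutes_compose[OF permutes_inv[OF q] pi])
  fix a assume "a < n"
  define x where "x = Hilbert_Choice.inv ?q a"
  have "x < n" unfolding x_def using permutes_less[OF permutes_inv[OF q] \<open>a < n\<close>] .
  then obtain i where x: "x \<in> block lam i" using block_exists by blast
  have "a \<in> block lam (block_target \<pi> i)"
    using align_in_block[OF pi pres x, of flip] permutes_inverses(1)[OF q] unfolding x_def by simp
  moreover have "\<pi> x \<in> block lam (block_target \<pi> i)"
    using block_image[OF pi pres block_index[OF x]] x by blast
  ultimately show "same_block a ((\<pi> \<circ> Hilbert_Choice.inv ?q) a)"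
    unfolding x_def by (simp add: same_blockI)
qed

end

section \<open>The root set \<open>J\<close>\<close>

locale gmpn_parabolic = partitioned +
  fixes m p :: nat
  assumes odd_or_twice_odd: "odd m \<or> (\<exists>k. odd k \<and> m = 2 * k)"
begin

abbreviation G :: "complex mat set" where "G \<equiv> Gmpn m p n"

definition odd_part :: nat where
  "odd_part = (if odd m then m else m div 2)"

lemma odd_part_odd: "odd odd_part"
  using odd_or_twice_odd by (auto simp: odd_part_def)

lemma mu_odd_part_nonzero: "z \<in> mu odd_part \<Longrightarrow> z \<noteq> 0"
  using odd_part_odd by (intro mu_nonzero) (auto intro: odd_pos)

lemma mu_m_nonzero: "z \<in> mu m \<Longrightarrow> z \<noteq> 0"
  using odd_or_twice_odd by (intro mu_nonzero) (auto intro: odd_pos)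

lemma mu_odd_part_or_neg: "z \<in> mu m \<Longrightarrow> z \<in> mu odd_part \<or> - z \<in> mu odd_part"
proof (cases "odd m")
  case False
  then obtain k where k: "odd k" "m = 2 * k" using odd_or_twice_odd by blast
  have "odd_part = k" unfolding odd_part_def using k False by simp
  thus "z \<in> mu m \<Longrightarrow> ?thesis" using mu_double_odd k by simp
qed (simp add: odd_part_def)

text \<open>As \<open>-1 \<notin> mu odd_part\<close>, the set \<open>J\<close> contains \<open>\<zeta> (e\<^sub>a - e\<^sub>b)\<close> for \<open>a < b\<close> but never
  \<open>\<zeta> (e\<^sub>b - e\<^sub>a)\<close>: this orientation is what no non-trivial element of \<open>P\<close> can preserve.\<close>
definition J :: "complex vec set" where
  "J = {vec2 n a b \<zeta> (-\<zeta>) | \<zeta> a b. \<zeta> \<in> mu odd_part \<and> a < b \<and> same_block a b}"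

lemma vec2_in_J: "\<zeta> \<in> mu odd_part \<Longrightarrow> a < b \<Longrightarrow> same_block a b \<Longrightarrow> vec2 n a b \<zeta> (-\<zeta>) \<in> J"
  unfolding J_def by blast

lemma J_carrier: "J \<subseteq> carrier_vec n"
  unfolding J_def by auto

lemma J_finite: "finite J"
proof -
  have "J \<subseteq> (\<lambda>(\<zeta>, a, b). vec2 n a b \<zeta> (-\<zeta>)) ` (mu odd_part \<times> {0..<n} \<times> {0..<n})"
  proof
    fix u assume "u \<in> J"
    then obtain \<zeta> a b where "u = vec2 n a b \<zeta> (-\<zeta>)" "\<zeta> \<in> mu odd_part" "same_block a b"
      unfolding J_def by blast
    thus "u \<in> (\<lambda>(\<zeta>, a, b). vec2 n a b \<zeta> (-\<zeta>)) ` (mu odd_part \<times> {0..<n} \<times> {0..<n})"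
      using same_block_less[of a b] by (intro image_eqI[of _ _ "(\<zeta>, a, b)"]) auto
  qed
  moreover have "finite (mu odd_part)"
    unfolding mu_def using odd_pos[OF odd_part_odd] by (intro finite_roots_unity) simp
  ultimately show ?thesis by (meson finite_SigmaI finite_atLeastLessThan finite_imageI finite_subset)
qed

lemma J_roots: "u \<in> J \<Longrightarrow> \<exists>r\<in>P. is_reflection n r \<and> is_root n r u"
proof -
  assume "u \<in> J"
  then obtain \<zeta> a b where u: "u = vec2 n a b \<zeta> (-\<zeta>)" and \<zeta>: "\<zeta> \<in> mu odd_part"
    and ab: "a < b" "same_block a b" unfolding J_def by blast
  have "monomial_mat n (Transposition.transpose a b) (\<lambda>_. 1) \<in> P"
    using parabolic_transpose[OF ab(2)] unfolding in_std_parabolic_iff by blast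
  moreover have "a < n" "b < n" using same_block_less[OF ab(2)] by auto
  ultimately show ?thesis
    using transposition_reflection[OF _ _ _ mu_odd_part_nonzero[OF \<zeta>]] ab(1) u by blast
qed

lemma std_parabolic_subset_Gmpn: "P \<subseteq> G"
proof
  fix h assume "h \<in> P"
  then obtain \<sigma> where "h = monomial_mat n \<sigma> (\<lambda>_. 1)" "\<sigma> permutes {0..<n}"
    unfolding in_std_parabolic_iff parabolic_def by blast
  thus "h \<in> G" unfolding Gmpn_def using mu_one by fastforce
qed

lemma stabilises_J_of_subset:
  assumes "\<pi> permutes {0..<n}" "\<forall>j<n. \<theta> j \<noteq> 0"
    and "(\<lambda>v. monomial_mat n \<pi> \<theta> *\<^sub>v v) ` J \<subseteq> J"
  shows "(\<lambda>v. monomial_mat n \<pi> \<theta> *\<^sub>v v) ` J = J"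
proof (rule card_subset_eq[OF J_finite assms(3)])
  have "inj_on (\<lambda>v. monomial_mat n \<pi> \<theta> *\<^sub>v v) J"
    using monomial_mat_mult_vec_cancel[OF assms(1,2)] J_carrier by (auto intro: inj_onI)
  thus "card ((\<lambda>v. monomial_mat n \<pi> \<theta> *\<^sub>v v) ` J) = card J" by (rule card_image)
qed

lemma stabiliser_block_preserving:
  assumes pi: "\<pi> permutes {0..<n}" and nonzero: "\<forall>j<n. \<theta> j \<noteq> 0"
    and stab: "(\<lambda>v. monomial_mat n \<pi> \<theta> *\<^sub>v v) ` J = J"
  shows "block_preserving \<pi> \<and> block_constant \<theta>"
proof (rule block_preserving_constantI[OF pi])
  fix a b assume ab: "same_block a b" "a < b"
  have abn: "a < n" "b < n" using same_block_less[OF ab(1)] by auto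
  have "monomial_mat n \<pi> \<theta> *\<^sub>v vec2 n a b 1 (-1) \<in> J"
    using stab vec2_in_J[OF mu_one ab(2,1)] by blast
  then obtain \<zeta> c d where e: "monomial_mat n \<pi> \<theta> *\<^sub>v vec2 n a b 1 (-1) = vec2 n c d \<zeta> (-\<zeta>)"
    and cd: "same_block c d" unfolding J_def by blast
  have eq: "vec2 n (\<pi> a) (\<pi> b) (\<theta> a * 1) (\<theta> b * -1) = vec2 n c d \<zeta> (-\<zeta>)"
    using e unfolding monomial_mat_mult_vec2[OF pi abn less_imp_neq[OF ab(2)]] .
  have "\<pi> a \<noteq> \<pi> b" using ab(2) permutes_inj[OF pi] unfolding inj_def by (metis less_irrefl)
  from vec2_eqD[OF eq this permutes_less[OF pi abn(1)] permutes_less[OF pi abn(2)]]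
  have "(\<pi> a = c \<and> \<pi> b = d \<and> \<theta> a = \<zeta> \<and> \<theta> b = \<zeta>) \<or> (\<pi> a = d \<and> \<pi> b = c \<and> \<theta> a = -\<zeta> \<and> \<theta> b = -\<zeta>)"
    using nonzero abn by auto
  thus "same_block (\<pi> a) (\<pi> b) \<and> \<theta> a = \<theta> b"
    using cd same_block_sym[OF cd] by auto
next
  fix a b assume ab: "a < n" "b < n" "same_block (\<pi> a) (\<pi> b)" "\<pi> a < \<pi> b"
  have "vec2 n (\<pi> a) (\<pi> b) 1 (-1) \<in> J" using vec2_in_J[OF mu_one ab(4,3)] .
  then obtain v where "v \<in> J" and v: "vec2 n (\<pi> a) (\<pi> b) 1 (-1) = monomial_mat n \<pi> \<theta> *\<^sub>v v"
    using stab by blast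
  then obtain \<zeta> x y where v_eq: "v = vec2 n x y \<zeta> (-\<zeta>)" and xy: "x < y" "same_block x y"
    unfolding J_def by blast
  have xyn: "x < n" "y < n" using same_block_less[OF xy(2)] by auto
  have "vec2 n (\<pi> a) (\<pi> b) 1 (-1) = vec2 n (\<pi> x) (\<pi> y) (\<theta> x * \<zeta>) (\<theta> y * -\<zeta>)"
    using v unfolding v_eq monomial_mat_mult_vec2[OF pi xyn less_imp_neq[OF xy(1)]] .
  from vec2_eqD[OF this less_imp_neq[OF ab(4)] permutes_less[OF pi ab(1)] permutes_less[OF pi ab(2)]]
  have "(\<pi> a = \<pi> x \<and> \<pi> b = \<pi> y) \<or> (\<pi> a = \<pi> y \<and> \<pi> b = \<pi> x)" by auto
  hence "(a = x \<and> b = y) \<or> (a = y \<and> b = x)" using permutes_inj[OF pi] unfolding inj_def by blast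
  thus "same_block a b" using xy(2) same_block_sym[OF xy(2)] by blast
qed

lemma std_parabolic_stabiliser_trivial:
  assumes "h \<in> P" and stab: "(\<lambda>v. h *\<^sub>v v) ` J = J"
  shows "h = 1\<^sub>m n"
proof -
  obtain \<sigma> where h: "h = monomial_mat n \<sigma> (\<lambda>_. 1)" and \<sigma>: "parabolic \<sigma>"
    using assms(1) unfolding in_std_parabolic_iff by blast
  have \<sigma>_perm: "\<sigma> permutes {0..<n}" using \<sigma> unfolding parabolic_def by blast
  have mono: "\<sigma> a < \<sigma> b" if ab: "same_block a b" "a < b" for a b
  proof -
    have abn: "a < n" "b < n" using same_block_less[OF ab(1)] by auto
    have "h *\<^sub>v vec2 n a b 1 (-1) \<in> J" using stab vec2_in_J[OF mu_one ab(2,1)] by blast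
    then obtain \<zeta> c d where e: "h *\<^sub>v vec2 n a b 1 (-1) = vec2 n c d \<zeta> (-\<zeta>)"
      and \<zeta>: "\<zeta> \<in> mu odd_part" and cd: "c < d" unfolding J_def by blast
    have eq: "vec2 n (\<sigma> a) (\<sigma> b) (1 * 1) (1 * -1) = vec2 n c d \<zeta> (-\<zeta>)"
      using e unfolding h monomial_mat_mult_vec2[OF \<sigma>_perm abn less_imp_neq[OF ab(2)]] .
    have "\<sigma> a \<noteq> \<sigma> b" using ab(2) permutes_inj[OF \<sigma>_perm] unfolding inj_def by (metis less_irrefl)
    from vec2_eqD[OF eq this permutes_less[OF \<sigma>_perm abn(1)] permutes_less[OF \<sigma>_perm abn(2)]]
    have "(\<sigma> a = c \<and> \<sigma> b = d) \<or> \<zeta> = -1" by auto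
    thus ?thesis using cd \<zeta> neg_one_notin_mu[OF odd_part_odd] by auto
  qed
  have "\<sigma> x = x" if "x < n" for x
  proof -
    obtain i where x: "x \<in> block lam i" using block_exists \<open>x < n\<close> by blast
    have "\<sigma> ` block lam i = block lam i"
      using \<sigma> permutes_blocks_iff[OF \<sigma>_perm] block_index[OF x] unfolding parabolic_def by blast
    moreover have "strict_mono_on (block lam i) \<sigma>"
      using mono same_blockI by (auto intro: strict_mono_onI)
    ultimately show ?thesis using strict_mono_on_interval_fixed x unfolding block_def by blast
  qed
  thus ?thesis unfolding h by (intro monomial_mat_eq_one) blast
qed

lemma align_maps_J:
  assumes pi: "\<pi> permutes {0..<n}" and pres: "block_preserving \<pi>"
    and \<theta>: "\<forall>j<n. \<theta> j \<in> mu m" and const: "block_constant \<theta>"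
  defines "q \<equiv> align \<pi> (\<lambda>i. \<theta> (kk lam (i - 1)) \<notin> mu odd_part)"
  shows "(\<lambda>v. monomial_mat n q \<theta> *\<^sub>v v) ` J \<subseteq> J"
proof
  fix w assume "w \<in> (\<lambda>v. monomial_mat n q \<theta> *\<^sub>v v) ` J"
  then obtain \<zeta> a b where w: "w = monomial_mat n q \<theta> *\<^sub>v vec2 n a b \<zeta> (-\<zeta>)"
    and \<zeta>: "\<zeta> \<in> mu odd_part" and ab: "a < b" "same_block a b" unfolding J_def by blast
  have abn: "a < n" "b < n" using same_block_less[OF ab(2)] by auto
  obtain i where a: "a \<in> block lam i" using block_exists[OF abn(1)] by blast
  have b: "b \<in> block lam i" using same_blockD[OF ab(2) a] .
  define c where "c = \<theta> (kk lam (i - 1))"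
  have first: "kk lam (i - 1) \<in> block lam i" using block_first[OF block_index[OF a]] .
  have "\<theta> a = c" "\<theta> b = c"
    using const same_blockI[OF a first] same_blockI[OF b first] unfolding c_def block_constant_def by auto
  moreover have q: "q permutes {0..<n}" unfolding q_def by (rule align_permutes[OF pi pres])
  ultimately have w: "w = vec2 n (q a) (q b) (c * \<zeta>) (- (c * \<zeta>))"
    unfolding w monomial_mat_mult_vec2[OF q abn less_imp_neq[OF ab(1)]] by simp
  have "q a \<in> block lam (block_target \<pi> i)" "q b \<in> block lam (block_target \<pi> i)"
    unfolding q_def using align_in_block[OF pi pres] a b by auto
  hence same: "same_block (q a) (q b)" by (rule same_blockI)
  have order: "q a < q b \<longleftrightarrow> (if c \<notin> mu odd_part then b < a else a < b)"
    unfolding q_def c_def by (rule align_less_iff[OF pi pres a b])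
  have order': "q b < q a \<longleftrightarrow> (if c \<notin> mu odd_part then a < b else b < a)"
    unfolding q_def c_def by (rule align_less_iff[OF pi pres b a])
  show "w \<in> J"
  proof (cases "c \<in> mu odd_part")
    case True
    thus ?thesis unfolding w using vec2_in_J[OF mu_mult[OF True \<zeta>] _ same] order ab(1) by simp
  next
    case False
    hence "- c \<in> mu odd_part"
      using mu_odd_part_or_neg \<theta> block_less[OF first] unfolding c_def by blast
    hence "- (c * \<zeta>) \<in> mu odd_part" using mu_mult[OF _ \<zeta>] by fastforce
    moreover have "q b < q a" using order' ab(1) False by simp
    ultimately have "vec2 n (q b) (q a) (- (c * \<zeta>)) (- (- (c * \<zeta>))) \<in> J"
      using vec2_in_J same_block_sym[OF same] by blast
    thus ?thesis unfolding w using vec2_swap[of "q a" "q b"] \<open>q b < q a\<close> by simp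
  qed
qed

lemma block_monomial_decomp:
  assumes pi: "\<pi> permutes {0..<n}" and \<theta>: "\<forall>j<n. \<theta> j \<in> mu m"
    and prod: "(\<Prod>j<n. \<theta> j) ^ (m div p) = 1"
    and pres: "block_preserving \<pi>" and const: "block_constant \<theta>"
  shows "\<exists>a b. a \<in> P \<and> b \<in> set_stabiliser G J \<and> monomial_mat n \<pi> \<theta> = a * b"
proof (intro exI conjI)
  define q where "q = align \<pi> (\<lambda>i. \<theta> (kk lam (i - 1)) \<notin> mu odd_part)"
  have q: "q permutes {0..<n}" unfolding q_def by (rule align_permutes[OF pi pres])
  show "monomial_mat n (\<pi> \<circ> Hilbert_Choice.inv q) (\<lambda>_. 1) \<in> P"
    using parabolic_comp_inv_align[OF pi pres] unfolding in_std_parabolic_iff q_def by blast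
  have "\<forall>j<n. \<theta> j \<noteq> 0" using \<theta> mu_m_nonzero by blast
  hence "(\<lambda>v. monomial_mat n q \<theta> *\<^sub>v v) ` J = J"
    using stabilises_J_of_subset[OF q] align_maps_J[OF pi pres \<theta> const] unfolding q_def by blast
  moreover have "monomial_mat n q \<theta> \<in> G" unfolding Gmpn_def using q \<theta> prod by blast
  ultimately show "monomial_mat n q \<theta> \<in> set_stabiliser G J" unfolding set_stabiliser_def by blast
  have "\<pi> \<circ> Hilbert_Choice.inv q \<circ> q = \<pi>" using permutes_inv_o(2)[OF q] by (simp add: comp_assoc)
  thus "monomial_mat n \<pi> \<theta> = monomial_mat n (\<pi> \<circ> Hilbert_Choice.inv q) (\<lambda>_. 1) * monomial_mat n q \<theta>"
    unfolding monomial_mat_mult[OF q] by simp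
qed

lemma normaliser_eq_product:
  "normaliser G P = {a * b | a b. a \<in> P \<and> b \<in> set_stabiliser G J}"
proof (intro equalityI subsetI)
  fix g assume g: "g \<in> normaliser G P"
  then obtain \<pi> \<theta> where g_eq: "g = monomial_mat n \<pi> \<theta>" and pi: "\<pi> permutes {0..<n}"
    and \<theta>: "\<forall>j<n. \<theta> j \<in> mu m" and prod: "(\<Prod>j<n. \<theta> j) ^ (m div p) = 1"
    unfolding normaliser_def Gmpn_def by blast
  have "\<forall>j<n. \<theta> j \<noteq> 0" using \<theta> mu_m_nonzero by blast
  hence "block_preserving \<pi> \<and> block_constant \<theta>"
    using g normalises_std_parabolic_iff[OF pi] unfolding g_eq normaliser_def by blast
  thus "g \<in> {a * b | a b. a \<in> P \<and> b \<in> set_stabiliser G J}"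
    using block_monomial_decomp[OF pi \<theta> prod] unfolding g_eq by blast
next
  fix g assume "g \<in> {a * b | a b. a \<in> P \<and> b \<in> set_stabiliser G J}"
  then obtain a b where g: "g = a * b" and "a \<in> P" and b: "b \<in> set_stabiliser G J" by blast
  then obtain \<sigma> where a: "a = monomial_mat n \<sigma> (\<lambda>_. 1)" and \<sigma>: "parabolic \<sigma>"
    unfolding in_std_parabolic_iff by blast
  obtain \<pi> \<theta> where b_eq: "b = monomial_mat n \<pi> \<theta>" and pi: "\<pi> permutes {0..<n}"
    and \<theta>: "\<forall>j<n. \<theta> j \<in> mu m" and prod: "(\<Prod>j<n. \<theta> j) ^ (m div p) = 1"
    using b unfolding set_stabiliser_def Gmpn_def by blast
  have nonzero: "\<forall>j<n. \<theta> j \<noteq> 0" using \<theta> mu_m_nonzero by blast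
  have "block_preserving \<pi> \<and> block_constant \<theta>"
    using stabiliser_block_preserving[OF pi nonzero] b unfolding b_eq set_stabiliser_def by blast
  moreover have \<sigma>\<pi>: "\<sigma> \<circ> \<pi> permutes {0..<n}"
    using \<sigma> pi unfolding parabolic_def by (blast intro: permutes_compose)
  ultimately have "block_preserving (\<sigma> \<circ> \<pi>) \<and> block_constant \<theta>"
    using block_preserving_comp[OF pi _ parabolic_block_preserving[OF \<sigma>]] by blast
  moreover have g_eq: "g = monomial_mat n (\<sigma> \<circ> \<pi>) \<theta>"
    unfolding g a b_eq monomial_mat_mult[OF pi] by simp
  moreover have "g \<in> G" unfolding g_eq Gmpn_def using \<sigma>\<pi> \<theta> prod by blast
  ultimately show "g \<in> normaliser G P"
    using normalises_std_parabolic_iff[OF \<sigma>\<pi> nonzero] unfolding normaliser_def by blast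
qed

lemma std_parabolic_inter_stabiliser: "P \<inter> set_stabiliser G J = {1\<^sub>m n}"
proof (intro equalityI subsetI)
  fix h assume "h \<in> P \<inter> set_stabiliser G J"
  hence "h \<in> P" "(\<lambda>v. h *\<^sub>v v) ` J = J" unfolding set_stabiliser_def by auto
  thus "h \<in> {1\<^sub>m n}" using std_parabolic_stabiliser_trivial by simp
next
  fix h :: "complex mat" assume h: "h \<in> {1\<^sub>m n}"
  have "(\<lambda>v. 1\<^sub>m n *\<^sub>v v) ` J = (\<lambda>v. v) ` J"
    using J_carrier by (intro image_cong) auto
  hence "(\<lambda>v. 1\<^sub>m n *\<^sub>v v) ` J = J" by simp
  moreover have "1\<^sub>m n \<in> G" using one_in_std_parabolic std_parabolic_subset_Gmpn by blast
  ultimately show "h \<in> P \<inter> set_stabiliser G J"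
    using h one_in_std_parabolic unfolding set_stabiliser_def by simp
qed

end

theorem corollary4:
  fixes m p n :: nat and lam :: "nat list"
  assumes "0 < m" "0 < p" "0 < n" "p dvd m"
    and "odd m \<or> (\<exists>k. odd k \<and> m = 2 * k)"
    and "is_partition lam n"
  shows "\<exists>J. (\<forall>u\<in>J. \<exists>r\<in>std_parabolic n lam. is_reflection n r \<and> is_root n r u)
           \<and> is_semidirect n (normaliser (Gmpn m p n) (std_parabolic n lam))
                (std_parabolic n lam) (set_stabiliser (Gmpn m p n) J)"
proof -
  interpret gmpn_parabolic n lam m p
    using assms(5,6) by unfold_locales
  have "\<forall>g\<in>normaliser G P. {g * h | h. h \<in> P} = {h * g | h. h \<in> P}"
    unfolding normaliser_def by blast
  hence "is_semidirect n (normaliser G P) P (set_stabiliser G J)"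
    unfolding is_semidirect_def using normaliser_eq_product std_parabolic_inter_stabiliser by simp
  thus ?thesis using J_roots by blast
qed

end
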